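(* Let $(\mathrm{RRT}_n)_{n\ge1}$ be the random recursive tree and $\mathrm{Out}(\mathrm{RRT}_n)$ its out-degree profile. For all $\varepsilon\in(0,1/2)$, all $q\in(1,2)$ and all functions $f:\mathbb N\to\mathbb R$ such that $f(x)=o\big((2-\varepsilon)^{x/q}\big)$ as $x\to\infty$, we have \[\frac1n\int f\,d\,\mathrm{Out}(\mathrm{RRT}_n)\to\sum_{x=0}^\infty 2^{-x-1}f(x)\] almost surely as $n\to\infty$.
   Context: $\mathbb N=\{0,1,2,\dots\}$. The random recursive tree: $\mathrm{RRT}_1$ has a single node (the root); $\mathrm{RRT}_{n+1}$ is obtained from $\mathrm{RRT}_n$ by choosing a node uniformly at random and adding a child to it. For a rooted tree $\tau$, its out-degree profile is the measure $\mathrm{Out}(\tau)=\sum_{v\in\tau}\delta_{\mathrm{outdeg}(v)}$ on $\mathbb N$, where $\mathrm{outdeg}(v)$ is the number of children of $v$. *)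

theory Defs
  imports "HOL-Probability.Probability" "HOL-Library.Landau_Symbols"
begin

text \<open>Random recursive tree sequence, coupled on one probability space.
  Nodes of RRT_n are 0,...,n-1 (node 0 is the root, node k+1 is the node added
  in step k+1).  A sample point w :: nat => nat records parent choices:
  w k is the parent of node k+1, chosen uniformly from the existing nodes
  {0..k}, independently over k.\<close>

definition rrt_space :: "(nat \<Rightarrow> nat) measure" where
  "rrt_space = (\<Pi>\<^sub>M k\<in>(UNIV::nat set). measure_pmf (pmf_of_set {0..k}))"

definition rrt_outdeg :: "(nat \<Rightarrow> nat) \<Rightarrow> nat \<Rightarrow> nat \<Rightarrow> nat" where
  "rrt_outdeg w n v = card {k. Suc k < n \<and> w k = v}"

text \<open>Out-degree profile of RRT_n: the finite counting measure
  sum over nodes v of delta_{outdeg v}, represented as a multiset on nat.\<close>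
definition rrt_Out :: "(nat \<Rightarrow> nat) \<Rightarrow> nat \<Rightarrow> nat multiset" where
  "rrt_Out w n = image_mset (rrt_outdeg w n) (mset_set {0..<n})"

definition integral_mset :: "(nat \<Rightarrow> real) \<Rightarrow> nat multiset \<Rightarrow> real" where
  "integral_mset f M = sum_mset (image_mset f M)"

end

theory Submission
  imports Defs "HOL-Library.Discrete_Functions" "HOL-Real_Asymp.Real_Asymp"
begin

text \<open>
  Let N_n(x) be the number of nodes of RRT_n with out-degree x. Attaching node n + 1 to a
  uniform node gives the exact recurrence
  E N_(n+1)(x) = (1 - 1/n) E N_n(x) + E N_n(x - 1) / n + [x = 0],
  hence |E N_n(x) - n 2^(-x-1)| <= 1. Re-choosing one parent changes every N_n(x) by at most 2,
  so McDiarmid's inequality and Borel-Cantelli give, almost surely,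
  |N_n(x) - n 2^(-x-1)| <= 1 + n^(3/4) for all x and all large n. This controls the degrees
  below k_n = (log_2 n) / 5, as 2^k_n <= n^(1/5).

  For the degrees above k_n, write |f x| <= C c^x with c < 2 and pick c < b < 2. The same
  recurrence gives E sum_v b^outdeg(v) <= n / (2 - b); Markov's inequality along n = 32^i and
  Borel-Cantelli bound this sum by n rho^(-k_n) for some rho in (c/b, 1), so these degrees
  contribute at most C n (c / (b rho))^k_n = o(n).
\<close>

section \<open>Uniform averages over parent sequences\<close>

text \<open>The first \<open>m\<close> parent choices of a recursive tree with \<open>m + 1\<close> nodes, padded with \<open>0\<close>.\<close>
definition parent_seqs :: "nat \<Rightarrow> (nat \<Rightarrow> nat) set" where
  "parent_seqs m = {u. (\<forall>k<m. u k \<le> k) \<and> (\<forall>k\<ge>m. u k = 0)}"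

lemma parent_seqs_0: "parent_seqs 0 = {\<lambda>_. 0}"
  by (auto simp: parent_seqs_def)

lemma parent_seqs_Suc: "parent_seqs (Suc m) = (\<lambda>(u, j). u(m := j)) ` (parent_seqs m \<times> {..m})"
proof
  show "(\<lambda>(u, j). u(m := j)) ` (parent_seqs m \<times> {..m}) \<subseteq> parent_seqs (Suc m)"
    by (auto simp: parent_seqs_def)
  show "parent_seqs (Suc m) \<subseteq> (\<lambda>(u, j). u(m := j)) ` (parent_seqs m \<times> {..m})"
  proof
    fix u assume u: "u \<in> parent_seqs (Suc m)"
    then have "(u(m := 0), u m) \<in> parent_seqs m \<times> {..m}"
      by (auto simp: parent_seqs_def)
    then show "u \<in> (\<lambda>(u, j). u(m := j)) ` (parent_seqs m \<times> {..m})"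
      by (force intro: image_eqI[where x = "(u(m := 0), u m)"])
  qed
qed

lemma parent_seqs_update: "u \<in> parent_seqs m \<Longrightarrow> j \<le> m \<Longrightarrow> u(m := j) \<in> parent_seqs (Suc m)"
  by (auto simp: parent_seqs_def)

lemma inj_on_parent_seqs_Suc: "inj_on (\<lambda>(u, j). u(m := j)) (parent_seqs m \<times> {..m})"
proof (rule inj_onI, clarify)
  fix u j u' j'
  assume u: "u \<in> parent_seqs m" "u' \<in> parent_seqs m" and eq: "u(m := j) = u'(m := j')"
  have "u k = u' k" for k
    using u fun_cong[OF eq, of k] by (cases "k = m") (auto simp: parent_seqs_def)
  then show "u = u' \<and> j = j'"
    using fun_cong[OF eq, of m] by auto
qed

lemma finite_parent_seqs: "finite (parent_seqs m)"
  by (induction m) (auto simp: parent_seqs_0 parent_seqs_Suc)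

lemma card_parent_seqs: "card (parent_seqs m) = fact m"
proof (induction m)
  case (Suc m)
  have "card (parent_seqs (Suc m)) = card (parent_seqs m \<times> {..m})"
    unfolding parent_seqs_Suc by (rule card_image[OF inj_on_parent_seqs_Suc])
  then show ?case by (simp add: card_cartesian_product Suc)
qed (simp add: parent_seqs_0)

definition avg :: "nat \<Rightarrow> ((nat \<Rightarrow> nat) \<Rightarrow> real) \<Rightarrow> real" where
  "avg m F = (\<Sum>u\<in>parent_seqs m. F u) / card (parent_seqs m)"

lemma avg_0: "avg 0 F = F (\<lambda>_. 0)"
  by (simp add: avg_def parent_seqs_0)

lemma avg_Suc: "avg (Suc m) F = avg m (\<lambda>u. (\<Sum>j\<le>m. F (u(m := j))) / Suc m)"
proof -
  have "(\<Sum>u\<in>parent_seqs (Suc m). F u) = (\<Sum>(u, j)\<in>parent_seqs m \<times> {..m}. F (u(m := j)))"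
    unfolding parent_seqs_Suc
    by (subst sum.reindex[OF inj_on_parent_seqs_Suc]) (simp add: case_prod_unfold)
  also have "\<dots> = (\<Sum>u\<in>parent_seqs m. \<Sum>j\<le>m. F (u(m := j)))"
    by (simp add: sum.cartesian_product)
  finally show ?thesis
    by (simp add: avg_def card_parent_seqs sum_divide_distrib[symmetric] field_simps)
qed

lemma avg_const [simp]: "avg m (\<lambda>_. c) = c"
  by (simp add: avg_def card_parent_seqs)

lemma avg_mono: "(\<And>u. u \<in> parent_seqs m \<Longrightarrow> F u \<le> G u) \<Longrightarrow> avg m F \<le> avg m G"
  unfolding avg_def by (intro divide_right_mono sum_mono) auto

lemma avg_cong: "(\<And>u. u \<in> parent_seqs m \<Longrightarrow> F u = G u) \<Longrightarrow> avg m F = avg m G"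
  unfolding avg_def by (metis (mono_tags, lifting) sum.cong)

lemma avg_cmult: "avg m (\<lambda>u. c * F u) = c * avg m F"
  unfolding avg_def by (simp add: sum_distrib_left)

lemma avg_uminus: "avg m (\<lambda>u. - F u) = - avg m F"
  using avg_cmult[of m "-1" F] by simp

lemma avg_add: "avg m (\<lambda>u. F u + G u) = avg m F + avg m G"
  unfolding avg_def by (simp add: sum.distrib add_divide_distrib)

lemma avg_sum: "finite I \<Longrightarrow> avg m (\<lambda>u. \<Sum>i\<in>I. F i u) = (\<Sum>i\<in>I. avg m (F i))"
  unfolding avg_def by (simp add: sum.swap[of _ I] sum_divide_distrib)

lemma avg_markov:
  assumes "0 < s" "\<And>u. u \<in> parent_seqs m \<Longrightarrow> 0 \<le> F u"
  shows "avg m (\<lambda>u. of_bool (s \<le> F u)) \<le> avg m F / s"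
proof -
  have "avg m (\<lambda>u. of_bool (s \<le> F u)) \<le> avg m (\<lambda>u. F u / s)"
    using assms by (intro avg_mono) (auto simp: field_simps)
  also have "\<dots> = avg m F / s"
    unfolding avg_def by (simp add: sum_divide_distrib mult.commute)
  finally show ?thesis .
qed

section \<open>Events determined by finitely many parent choices\<close>

definition prefix_dep :: "nat \<Rightarrow> ((nat \<Rightarrow> nat) \<Rightarrow> 'a) \<Rightarrow> bool" where
  "prefix_dep m F \<longleftrightarrow> (\<forall>w w'. (\<forall>k<m. w k = w' k) \<longrightarrow> F w = F w')"

definition truncate_seq :: "nat \<Rightarrow> (nat \<Rightarrow> nat) \<Rightarrow> nat \<Rightarrow> nat" where
  "truncate_seq m w k = (if k < m then w k else 0)"

lemma prefix_dep_comp: "prefix_dep m F \<Longrightarrow> prefix_dep m (\<lambda>w. g (F w))"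
  unfolding prefix_dep_def by metis

lemma prefix_dep_combine: "(\<And>x. prefix_dep m (F x)) \<Longrightarrow> prefix_dep m (\<lambda>w. G (\<lambda>x. F x w))"
  unfolding prefix_dep_def by (intro allI impI arg_cong[where f = G] ext) blast

lemma prefix_dep_truncate_seq: "prefix_dep m F \<Longrightarrow> F (truncate_seq m w) = F w"
  unfolding prefix_dep_def truncate_seq_def by simp

lemma truncate_seq_eq_iff: "truncate_seq m w = truncate_seq m w' \<longleftrightarrow> (\<forall>k<m. w k = w' k)"
  by (simp add: fun_eq_iff truncate_seq_def)

lemma truncate_seq_parent_seqs: "u \<in> parent_seqs m \<Longrightarrow> truncate_seq m u = u"
  by (auto simp: fun_eq_iff truncate_seq_def parent_seqs_def)

lemma truncate_seq_in_parent_seqs: "\<forall>k. w k \<le> k \<Longrightarrow> truncate_seq m w \<in> parent_seqs m"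
  by (simp add: truncate_seq_def parent_seqs_def)

lemma countable_range_truncate_seq: "countable (range (truncate_seq m))"
proof -
  have "truncate_seq m w = (\<lambda>k. if k < length (map w [0..<m]) then map w [0..<m] ! k else 0)" for w
    by (auto simp: truncate_seq_def)
  then have "range (truncate_seq m) \<subseteq> (\<lambda>xs k. if k < length xs then xs ! k else 0) ` UNIV"
    by blast
  then show ?thesis
    by (rule countable_subset) simp
qed

definition parent_choice :: "nat \<Rightarrow> nat measure" where
  "parent_choice k = measure_pmf (pmf_of_set {0..k})"

lemma rrt_space_eq_PiM: "rrt_space = PiM UNIV parent_choice"
  by (simp add: rrt_space_def parent_choice_def[abs_def])

lemma prob_space_parent_choice: "prob_space (parent_choice k)"
  by (simp add: parent_choice_def measure_pmf.prob_space_axioms)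

lemma sets_parent_choice [simp]: "sets (parent_choice k) = UNIV"
  by (simp add: parent_choice_def)

lemma space_rrt_space [simp]: "space rrt_space = UNIV"
  by (simp add: rrt_space_def space_PiM)

interpretation rrt: prob_space rrt_space
  unfolding rrt_space_eq_PiM by (intro prob_space_PiM prob_space_parent_choice)

lemma measurable_rrt_component [measurable]:
  "(\<lambda>w. w k) \<in> measurable rrt_space (count_space UNIV)"
proof -
  have "(\<lambda>w. w k) \<in> measurable (PiM UNIV parent_choice) (parent_choice k)"
    by (rule measurable_component_singleton) simp
  then show ?thesis
    unfolding rrt_space_eq_PiM
    using measurable_cong_sets[of "PiM UNIV parent_choice" _ "parent_choice k" "count_space UNIV"]
    by simp
qed

lemma measurable_truncate_seq:
  "truncate_seq m \<in> measurable rrt_space (count_space (range (truncate_seq m)))"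
proof (subst measurable_count_space_eq_countable[OF countable_range_truncate_seq], intro conjI ballI)
  show "truncate_seq m \<in> space rrt_space \<rightarrow> range (truncate_seq m)"
    by auto
  fix g assume "g \<in> range (truncate_seq m)"
  then obtain w' where "g = truncate_seq m w'"
    by blast
  then have "truncate_seq m -` {g} \<inter> space rrt_space = {w \<in> space rrt_space. \<forall>k\<in>{..<m}. w k = g k}"
    by (auto simp: truncate_seq_eq_iff) (auto simp: truncate_seq_def)
  also have "\<dots> \<in> sets rrt_space"
    by measurable
  finally show "truncate_seq m -` {g} \<inter> space rrt_space \<in> sets rrt_space" .
qed

lemma measurable_prefix_dep:
  assumes "prefix_dep m F" "\<And>w. F w \<in> space N"
  shows "F \<in> measurable rrt_space N"
proof -
  have "(\<lambda>w. F (truncate_seq m w)) \<in> measurable rrt_space N"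
    by (rule measurable_compose[OF measurable_truncate_seq]) (use assms(2) in auto)
  then show ?thesis
    by (simp add: prefix_dep_truncate_seq[OF assms(1)])
qed

lemma AE_parent_le: "AE w in rrt_space. \<forall>k. w k \<le> k"
proof (subst AE_all_countable, intro allI)
  fix k
  have "AE j in parent_choice k. j \<le> k"
    unfolding parent_choice_def by (rule AE_pmfI) auto
  then show "AE w in rrt_space. w k \<le> k"
    unfolding rrt_space_eq_PiM
    using AE_PiM_component[of UNIV parent_choice k "\<lambda>j. j \<le> k"] prob_space_parent_choice
    by blast
qed

lemma cylinder_eq_prod_emb:
  "{w. \<forall>k<m. w k = u k} = prod_emb UNIV parent_choice {..<m} (PiE {..<m} (\<lambda>k. {u k}))"
proof -
  have "PiE UNIV (\<lambda>k. space (parent_choice k)) = UNIV"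
    by (simp add: parent_choice_def)
  then show ?thesis
    by (auto simp: prod_emb_def restrict_PiE_iff)
qed

lemma cylinder_sets: "{w. \<forall>k<m. w k = u k} \<in> sets rrt_space"
proof -
  have "{w. \<forall>k<m. w k = u k} = {w \<in> space rrt_space. \<forall>k\<in>{..<m}. w k = u k}"
    by auto
  also have "\<dots> \<in> sets rrt_space"
    by measurable
  finally show ?thesis .
qed

lemma measure_cylinder:
  assumes "u \<in> parent_seqs m"
  shows "measure rrt_space {w. \<forall>k<m. w k = u k} = 1 / fact m"
proof -
  have "emeasure rrt_space {w. \<forall>k<m. w k = u k} = (\<Prod>k<m. emeasure (parent_choice k) {u k})"
    unfolding cylinder_eq_prod_emb rrt_space_eq_PiM
    by (rule emeasure_PiM_emb) (simp_all add: prob_space_parent_choice)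
  also have "\<dots> = (\<Prod>k<m. ennreal (1 / Suc k))"
  proof (rule prod.cong)
    fix k assume "k \<in> {..<m}"
    then have "{0..k} \<inter> {u k} = {u k}"
      using assms by (auto simp: parent_seqs_def)
    then show "emeasure (parent_choice k) {u k} = ennreal (1 / Suc k)"
      unfolding parent_choice_def by (subst emeasure_pmf_of_set) auto
  qed simp
  also have "\<dots> = ennreal (1 / fact m)"
    by (simp add: prod_ennreal fact_prod_Suc prod_dividef atLeast0LessThan)
  finally show ?thesis
    by (simp add: rrt.emeasure_eq_measure)
qed

lemma integral_prefix_dep:
  fixes F :: "(nat \<Rightarrow> nat) \<Rightarrow> real"
  assumes "prefix_dep m F"
  shows "integral\<^sup>L rrt_space F = avg m F"
proof -
  define cyl where "cyl u = {w. \<forall>k<m. w k = u k}" for u :: "nat \<Rightarrow> nat"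
  define G where "G w = (\<Sum>u\<in>parent_seqs m. F u * indicator (cyl u) w)" for w
  have FG: "AE w in rrt_space. F w = G w"
    using AE_parent_le
  proof eventually_elim
    case (elim w)
    have "indicator (cyl u) w = (of_bool (u = truncate_seq m w) :: real)" if "u \<in> parent_seqs m" for u
      using truncate_seq_eq_iff[of m u w] truncate_seq_parent_seqs[OF that]
      by (auto simp: cyl_def indicator_def)
    then have "G w = (\<Sum>u\<in>parent_seqs m. F u * of_bool (u = truncate_seq m w))"
      by (simp add: G_def)
    also have "\<dots> = F (truncate_seq m w)"
      using elim finite_parent_seqs[of m] truncate_seq_in_parent_seqs[OF elim]
      by (simp add: of_bool_def if_distrib cong: if_cong)
    finally have "G w = F (truncate_seq m w)" .
    then show ?case
      by (simp add: prefix_dep_truncate_seq[OF assms])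
  qed
  have cyl: "integrable rrt_space (indicator (cyl u) :: _ \<Rightarrow> real)" for u
    unfolding cyl_def by (intro integrable_real_indicator cylinder_sets) (simp add: rrt.emeasure_eq_measure)
  then have "integrable rrt_space G"
    unfolding G_def by (intro Bochner_Integration.integrable_sum integrable_mult_right)
  moreover have "F \<in> borel_measurable rrt_space"
    by (rule measurable_prefix_dep[OF assms]) simp
  ultimately have "integral\<^sup>L rrt_space F = integral\<^sup>L rrt_space G"
    using FG by (intro integral_cong_AE) auto
  also have "\<dots> = (\<Sum>u\<in>parent_seqs m. F u * measure rrt_space (cyl u))"
    unfolding G_def using cyl by (simp add: cyl_def cylinder_sets)
  also have "\<dots> = avg m F"
    by (simp add: avg_def card_parent_seqs cyl_def measure_cylinder sum_divide_distrib)
  finally show ?thesis .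
qed

lemma
  assumes "prefix_dep m P"
  shows sets_prefix_dep: "{w. P w} \<in> sets rrt_space"
    and measure_prefix_dep: "measure rrt_space {w. P w} = avg m (\<lambda>w. of_bool (P w))"
proof -
  have ind: "indicator {w. P w} = (\<lambda>w. of_bool (P w) :: real)"
    by (auto simp: indicator_def)
  have dep: "prefix_dep m (indicator {w. P w} :: _ \<Rightarrow> real)"
    unfolding ind by (rule prefix_dep_comp[OF assms])
  have "(indicator {w. P w} :: _ \<Rightarrow> real) \<in> borel_measurable rrt_space"
    by (rule measurable_prefix_dep[OF dep]) simp
  then show sets: "{w. P w} \<in> sets rrt_space"
    by (simp add: borel_measurable_indicator_iff)
  have "measure rrt_space {w. P w} = integral\<^sup>L rrt_space (indicator {w. P w})"
    using sets by simp
  also have "\<dots> = avg m (\<lambda>w. of_bool (P w))"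
    using integral_prefix_dep[OF dep] by (simp add: ind)
  finally show "measure rrt_space {w. P w} = avg m (\<lambda>w. of_bool (P w))" .
qed

section \<open>McDiarmid's inequality for uniform parent sequences\<close>

lemma hoeffding_uniform:
  fixes g :: "nat \<Rightarrow> real"
  assumes bounds: "\<And>j. j \<le> m \<Longrightarrow> a \<le> g j \<and> g j \<le> a + D" and "0 \<le> l"
  shows "(\<Sum>j\<le>m. exp (l * (g j - (\<Sum>i\<le>m. g i) / Suc m))) / Suc m \<le> exp (l\<^sup>2 * D\<^sup>2 / 8)"
proof (cases "l = 0")
  case False
  with \<open>0 \<le> l\<close> have "0 < l" by simp
  let ?p = "pmf_of_set {..m}"
  interpret interval_bounded_random_variable ?p g a "a + D"
  proof
    show "AE x in measure_pmf ?p. g x \<in> {a..a + D}"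
      by (rule AE_pmfI) (use bounds in auto)
  qed simp
  have mean: "measure_pmf.expectation ?p g = (\<Sum>i\<le>m. g i) / Suc m"
    by (subst integral_pmf_of_set) auto
  have "nn_integral ?p (\<lambda>x. exp (l * (g x - measure_pmf.expectation ?p g)))
        = ennreal ((\<Sum>j\<le>m. exp (l * (g j - (\<Sum>i\<le>m. g i) / Suc m))) / Suc m)"
    by (subst nn_integral_eq_integral)
      (auto intro!: integrable_measure_pmf_finite simp: mean integral_pmf_of_set)
  moreover have "nn_integral ?p (\<lambda>x. exp (l * (g x - measure_pmf.expectation ?p g)))
      \<le> ennreal (exp (l\<^sup>2 * (a + D - a)\<^sup>2 / 8))"
    by (rule Hoeffdings_lemma_nn_integral[OF \<open>0 < l\<close>])
  ultimately show ?thesis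
    by simp
qed simp

definition bounded_differences :: "nat \<Rightarrow> real \<Rightarrow> ((nat \<Rightarrow> nat) \<Rightarrow> real) \<Rightarrow> bool" where
  "bounded_differences m D F \<longleftrightarrow>
     (\<forall>u\<in>parent_seqs m. \<forall>k<m. \<forall>j\<le>k. \<bar>F (u(k := j)) - F u\<bar> \<le> D)"

lemma bounded_differences_uminus:
  assumes "bounded_differences m D F"
  shows "bounded_differences m D (\<lambda>u. - F u)"
  unfolding bounded_differences_def
proof (intro ballI allI impI)
  fix u k j
  assume "u \<in> parent_seqs m" "k < m" "j \<le> k"
  with assms have "\<bar>F (u(k := j)) - F u\<bar> \<le> D"
    unfolding bounded_differences_def by blast
  then show "\<bar>- F (u(k := j)) - - F u\<bar> \<le> D"
    by arith
qed

lemma bounded_differences_average_last: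
  assumes "bounded_differences (Suc m) D F"
  shows "bounded_differences m D (\<lambda>u. (\<Sum>j\<le>m. F (u(m := j))) / Suc m)"
  unfolding bounded_differences_def
proof (intro ballI allI impI)
  fix u k i assume u: "u \<in> parent_seqs m" and "k < m" "i \<le> k"
  have "\<bar>(\<Sum>j\<le>m. F ((u(k := i))(m := j))) - (\<Sum>j\<le>m. F (u(m := j)))\<bar>
        = \<bar>\<Sum>j\<le>m. F ((u(m := j))(k := i)) - F (u(m := j))\<bar>"
    using \<open>k < m\<close> by (simp add: sum_subtractf fun_upd_twist)
  also have "\<dots> \<le> (\<Sum>j\<le>m. \<bar>F ((u(m := j))(k := i)) - F (u(m := j))\<bar>)"
    by (rule sum_abs)
  also have "\<dots> \<le> (\<Sum>j\<le>m. D)"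
    using assms \<open>k < m\<close> \<open>i \<le> k\<close> parent_seqs_update[OF u]
    by (intro sum_mono) (simp add: bounded_differences_def)
  finally show "\<bar>(\<Sum>j\<le>m. F ((u(k := i))(m := j))) / Suc m - (\<Sum>j\<le>m. F (u(m := j))) / Suc m\<bar> \<le> D"
    by (simp add: diff_divide_distrib[symmetric] field_simps)
qed

lemma hoeffding_last_choice:
  assumes "bounded_differences (Suc m) D F" "u \<in> parent_seqs m" "0 \<le> l"
  shows "(\<Sum>j\<le>m. exp (l * (F (u(m := j)) - (\<Sum>i\<le>m. F (u(m := i))) / Suc m))) / Suc m
    \<le> exp (l\<^sup>2 * D\<^sup>2 / 8)"
proof -
  define a where "a = Min ((\<lambda>j. F (u(m := j))) ` {..m})"
  have "a \<in> (\<lambda>j. F (u(m := j))) ` {..m}"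
    unfolding a_def by (intro Min_in) auto
  then obtain j0 where j0: "j0 \<le> m" "F (u(m := j0)) = a"
    by auto
  have "a \<le> F (u(m := j)) \<and> F (u(m := j)) \<le> a + D" if "j \<le> m" for j
  proof
    show "a \<le> F (u(m := j))"
      unfolding a_def using that by (intro Min_le) auto
    have "\<bar>F ((u(m := j0))(m := j)) - F (u(m := j0))\<bar> \<le> D"
      using assms(1) parent_seqs_update[OF assms(2) j0(1)] that
      unfolding bounded_differences_def by blast
    then show "F (u(m := j)) \<le> a + D"
      using j0 by simp
  qed
  then show ?thesis
    using hoeffding_uniform[of m a "\<lambda>j. F (u(m := j))" D l] assms(3) by simp
qed

text \<open>Induction along the martingale that reveals the parent choices one at a time:
  \<open>avg_Suc\<close> averages out the last choice first, and Hoeffding's lemma bounds that step.\<close>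
lemma mcdiarmid_exp:
  assumes "bounded_differences m D F" "0 \<le> l"
  shows "avg m (\<lambda>u. exp (l * (F u - avg m F))) \<le> exp (l\<^sup>2 * D\<^sup>2 * m / 8)"
  using assms(1)
proof (induction m arbitrary: F)
  case 0
  then show ?case by (simp add: avg_0)
next
  case (Suc m)
  define G where "G u = (\<Sum>j\<le>m. F (u(m := j))) / Suc m" for u
  have "avg (Suc m) (\<lambda>u. exp (l * (F u - avg m G)))
        = avg m (\<lambda>u. (\<Sum>j\<le>m. exp (l * (F (u(m := j)) - G u))) / Suc m * exp (l * (G u - avg m G)))"
    unfolding avg_Suc
  proof (rule avg_cong)
    fix u
    have "exp (l * (F (u(m := j)) - avg m G)) = exp (l * (F (u(m := j)) - G u)) * exp (l * (G u - avg m G))"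
      for j
      unfolding mult_exp_exp by (simp add: algebra_simps)
    then show "(\<Sum>j\<le>m. exp (l * (F (u(m := j)) - avg m G))) / Suc m
        = (\<Sum>j\<le>m. exp (l * (F (u(m := j)) - G u))) / Suc m * exp (l * (G u - avg m G))"
      by (simp add: sum_distrib_right)
  qed
  also have "\<dots> \<le> avg m (\<lambda>u. exp (l\<^sup>2 * D\<^sup>2 / 8) * exp (l * (G u - avg m G)))"
    unfolding G_def using Suc.prems \<open>0 \<le> l\<close>
    by (intro avg_mono mult_right_mono hoeffding_last_choice) auto
  also have "\<dots> \<le> exp (l\<^sup>2 * D\<^sup>2 / 8) * exp (l\<^sup>2 * D\<^sup>2 * m / 8)"
    unfolding avg_cmult G_def
    by (intro mult_left_mono Suc.IH bounded_differences_average_last Suc.prems) auto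
  also have "\<dots> = exp (l\<^sup>2 * D\<^sup>2 * Suc m / 8)"
    by (simp add: algebra_simps add_divide_distrib flip: exp_add)
  finally show ?case
    unfolding avg_Suc[of m F] G_def .
qed

lemma mcdiarmid_upper_tail:
  assumes "bounded_differences m D F" "0 \<le> l"
  shows "avg m (\<lambda>u. of_bool (t \<le> F u - avg m F)) \<le> exp (- l * t + l\<^sup>2 * D\<^sup>2 * m / 8)"
proof -
  have "avg m (\<lambda>u. of_bool (t \<le> F u - avg m F)) \<le> avg m (\<lambda>u. exp (- l * t) * exp (l * (F u - avg m F)))"
  proof (rule avg_mono)
    fix u
    have "of_bool (t \<le> F u - avg m F) \<le> exp (l * (F u - avg m F - t))"
      using \<open>0 \<le> l\<close> by (cases "t \<le> F u - avg m F") auto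
    then show "of_bool (t \<le> F u - avg m F) \<le> exp (- l * t) * exp (l * (F u - avg m F))"
      unfolding mult_exp_exp by (simp add: algebra_simps)
  qed
  also have "\<dots> \<le> exp (- l * t) * exp (l\<^sup>2 * D\<^sup>2 * m / 8)"
    unfolding avg_cmult by (intro mult_left_mono mcdiarmid_exp assms) auto
  also have "\<dots> = exp (- l * t + l\<^sup>2 * D\<^sup>2 * m / 8)"
    by (rule mult_exp_exp)
  finally show ?thesis .
qed

lemma mcdiarmid_tail:
  assumes "bounded_differences m D F" "0 \<le> l"
  shows "avg m (\<lambda>u. of_bool (t \<le> \<bar>F u - avg m F\<bar>)) \<le> 2 * exp (- l * t + l\<^sup>2 * D\<^sup>2 * m / 8)"
proof -
  have "avg m (\<lambda>u. of_bool (t \<le> \<bar>F u - avg m F\<bar>))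
        \<le> avg m (\<lambda>u. of_bool (t \<le> F u - avg m F) + of_bool (t \<le> - F u - avg m (\<lambda>u. - F u)))"
    by (rule avg_mono) (auto simp: avg_uminus)
  also have "\<dots> \<le> 2 * exp (- l * t + l\<^sup>2 * D\<^sup>2 * m / 8)"
    unfolding avg_add
    using add_mono[OF mcdiarmid_upper_tail[OF assms, where t = t]
        mcdiarmid_upper_tail[OF bounded_differences_uminus[OF assms(1)] assms(2), where t = t]]
    by simp
  finally show ?thesis .
qed

section \<open>Out-degree statistics\<close>

definition degree_count :: "nat \<Rightarrow> nat \<Rightarrow> (nat \<Rightarrow> nat) \<Rightarrow> real" where
  "degree_count n x w = (\<Sum>v<n. of_bool (rrt_outdeg w n v = x))"

definition degree_moment :: "real \<Rightarrow> nat \<Rightarrow> (nat \<Rightarrow> nat) \<Rightarrow> real" where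
  "degree_moment b n w = (\<Sum>v<n. b ^ rrt_outdeg w n v)"

lemma integral_mset_rrt_Out: "integral_mset f (rrt_Out w n) = (\<Sum>v<n. f (rrt_outdeg w n v))"
  by (simp add: integral_mset_def rrt_Out_def image_mset.compositionality sum_unfold_sum_mset
      atLeast0LessThan o_def)

lemma finite_outdeg_set [simp]: "finite {k. Suc k < n \<and> w k = v}"
  by (rule finite_subset[of _ "{..<n}"]) auto

lemma rrt_outdeg_le: "rrt_outdeg w n v \<le> n - 1"
proof -
  have "rrt_outdeg w n v \<le> card {..<n - 1}"
    unfolding rrt_outdeg_def by (rule card_mono) auto
  then show ?thesis by simp
qed

lemma rrt_outdeg_mono: "n \<le> n' \<Longrightarrow> rrt_outdeg w n v \<le> rrt_outdeg w n' v"
  unfolding rrt_outdeg_def by (rule card_mono) auto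

lemma rrt_outdeg_update_other: "v \<noteq> u k \<Longrightarrow> v \<noteq> i \<Longrightarrow> rrt_outdeg (u(k := i)) n v = rrt_outdeg u n v"
  unfolding rrt_outdeg_def by (rule arg_cong[where f = card]) auto

lemma rrt_outdeg_extend:
  "v \<noteq> Suc m \<Longrightarrow> rrt_outdeg (u(m := j)) (Suc (Suc m)) v = rrt_outdeg u (Suc m) v + of_bool (v = j)"
proof -
  assume "v \<noteq> Suc m"
  have "{k. Suc k < Suc (Suc m) \<and> (u(m := j)) k = v}
        = (if v = j then insert m else id) {k. Suc k < Suc m \<and> u k = v}"
    by auto
  then show ?thesis
    by (simp add: rrt_outdeg_def)
qed

lemma rrt_outdeg_extend_new:
  assumes "u \<in> parent_seqs m" "j \<le> m"
  shows "rrt_outdeg (u(m := j)) (Suc (Suc m)) (Suc m) = 0"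
proof -
  have "(u(m := j)) k \<noteq> Suc m" if "Suc k < Suc (Suc m)" for k
  proof (cases "k = m")
    case False
    with that assms(1) have "u k \<le> k" "k < m"
      by (auto simp: parent_seqs_def)
    with False show ?thesis
      by simp
  qed (use assms(2) in simp)
  then have "{k. Suc k < Suc (Suc m) \<and> (u(m := j)) k = Suc m} = {}"
    by blast
  then show ?thesis
    by (simp add: rrt_outdeg_def)
qed

lemma prefix_dep_sum_outdeg: "n \<le> Suc m \<Longrightarrow> prefix_dep m (\<lambda>w. \<Sum>v<n. \<phi> (rrt_outdeg w n v))"
  unfolding prefix_dep_def rrt_outdeg_def
  by (auto intro!: sum.cong arg_cong[where f = \<phi>] arg_cong[where f = card])

lemma prefix_dep_degree_count: "n \<le> Suc m \<Longrightarrow> prefix_dep m (degree_count n x)"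
  unfolding degree_count_def[abs_def] by (rule prefix_dep_sum_outdeg)

lemma prefix_dep_degree_moment: "n \<le> Suc m \<Longrightarrow> prefix_dep m (degree_moment b n)"
  unfolding degree_moment_def[abs_def] by (rule prefix_dep_sum_outdeg)

lemma degree_count_eq_0:
  assumes "n \<le> x"
  shows "degree_count n x w = 0"
proof -
  have "rrt_outdeg w n v \<noteq> x" if "v < n" for v
    using rrt_outdeg_le[of w n v] that assms by linarith
  then show ?thesis
    by (simp add: degree_count_def)
qed

lemma degree_moment_nonneg: "0 \<le> b \<Longrightarrow> 0 \<le> degree_moment b n w"
  unfolding degree_moment_def by (intro sum_nonneg) simp

lemma degree_moment_mono:
  assumes "1 \<le> b" "n \<le> n'"
  shows "degree_moment b n w \<le> degree_moment b n' w"
proof -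
  have "degree_moment b n w \<le> (\<Sum>v<n. b ^ rrt_outdeg w n' v)"
    unfolding degree_moment_def using assms by (intro sum_mono power_increasing rrt_outdeg_mono)
  also have "\<dots> \<le> degree_moment b n' w"
    unfolding degree_moment_def using assms by (intro sum_mono2) auto
  finally show ?thesis .
qed

text \<open>Attaching node \<open>m + 1\<close> to \<open>j\<close> raises the out-degree of \<open>j\<close> only, and adds a leaf.\<close>
lemma sum_outdeg_extend:
  fixes \<phi> :: "nat \<Rightarrow> real"
  assumes u: "u \<in> parent_seqs m"
  defines "d \<equiv> rrt_outdeg u (Suc m)"
  shows "(\<Sum>j\<le>m. \<Sum>v<Suc (Suc m). \<phi> (rrt_outdeg (u(m := j)) (Suc (Suc m)) v))
         = (\<Sum>v<Suc m. m * \<phi> (d v) + \<phi> (d v + 1)) + Suc m * \<phi> 0"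
proof -
  have "(\<Sum>j\<le>m. \<Sum>v<Suc (Suc m). \<phi> (rrt_outdeg (u(m := j)) (Suc (Suc m)) v))
        = (\<Sum>j\<le>m. (\<Sum>v<Suc m. \<phi> (d v + of_bool (v = j))) + \<phi> 0)"
    using u by (intro sum.cong) (simp_all add: d_def rrt_outdeg_extend rrt_outdeg_extend_new)
  also have "\<dots> = (\<Sum>v<Suc m. \<Sum>j\<le>m. \<phi> (d v + of_bool (v = j))) + Suc m * \<phi> 0"
    by (simp add: sum.distrib sum.swap[of _ "{..m}"])
  also have "(\<Sum>v<Suc m. \<Sum>j\<le>m. \<phi> (d v + of_bool (v = j))) = (\<Sum>v<Suc m. m * \<phi> (d v) + \<phi> (d v + 1))"
  proof (rule sum.cong)
    fix v assume "v \<in> {..<Suc m}"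
    then have "v \<in> {..m}" by auto
    then have "(\<Sum>j\<le>m. \<phi> (d v + of_bool (v = j))) = \<phi> (d v + 1) + (\<Sum>j\<in>{..m} - {v}. \<phi> (d v))"
      by (subst sum.remove[of _ v]) auto
    then show "(\<Sum>j\<le>m. \<phi> (d v + of_bool (v = j))) = m * \<phi> (d v) + \<phi> (d v + 1)"
      using \<open>v \<in> {..m}\<close> by simp
  qed simp
  finally show ?thesis .
qed

lemma avg_sum_outdeg_Suc:
  fixes \<phi> :: "nat \<Rightarrow> real"
  shows "avg (Suc m) (\<lambda>u. \<Sum>v<Suc (Suc m). \<phi> (rrt_outdeg u (Suc (Suc m)) v))
    = avg m (\<lambda>u. \<Sum>v<Suc m. m * \<phi> (rrt_outdeg u (Suc m) v) + \<phi> (rrt_outdeg u (Suc m) v + 1)) / Suc m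
      + \<phi> 0"
proof -
  have "avg (Suc m) (\<lambda>u. \<Sum>v<Suc (Suc m). \<phi> (rrt_outdeg u (Suc (Suc m)) v))
    = avg m (\<lambda>u. (\<Sum>v<Suc m. m * \<phi> (rrt_outdeg u (Suc m) v) + \<phi> (rrt_outdeg u (Suc m) v + 1)) / Suc m
        + \<phi> 0)"
    unfolding avg_Suc
    by (intro avg_cong) (simp add: sum_outdeg_extend add_divide_distrib del: sum.lessThan_Suc)
  then show ?thesis
    by (simp add: avg_add avg_cmult[of m "1 / Suc m", simplified])
qed

lemma abs_weighted_mean_le_1:
  fixes m a b :: real
  assumes "0 \<le> m" "\<bar>a\<bar> \<le> 1" "\<bar>b\<bar> \<le> 1"
  shows "\<bar>(m * a + b) / (m + 1)\<bar> \<le> 1"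
proof -
  have "\<bar>m * a + b\<bar> \<le> m * 1 + 1"
    using abs_triangle_ineq[of "m * a" b] mult_left_mono[OF assms(2,1)] assms(1,3)
    by (simp add: abs_mult)
  then show ?thesis
    using assms(1) by (simp add: abs_divide)
qed

lemma avg_degree_count_Suc:
  "avg (Suc m) (degree_count (Suc (Suc m)) x)
   = (m * avg m (degree_count (Suc m) x)
       + (if x = 0 then 0 else avg m (degree_count (Suc m) (x - 1)))) / Suc m
     + of_bool (x = 0)"
proof -
  have shift: "(\<Sum>v<Suc m. of_bool (rrt_outdeg u (Suc m) v + 1 = x))
      = (if x = 0 then 0 else degree_count (Suc m) (x - 1) u)" for u
    by (cases x) (simp_all add: degree_count_def)
  have "(\<lambda>u. \<Sum>v<Suc m. real m * of_bool (rrt_outdeg u (Suc m) v = x) + of_bool (rrt_outdeg u (Suc m) v + 1 = x))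
      = (\<lambda>u. m * degree_count (Suc m) x u + (if x = 0 then 0 else degree_count (Suc m) (x - 1) u))"
    by (simp only: sum.distrib sum_distrib_left[symmetric] shift degree_count_def)
  then show ?thesis
    using avg_sum_outdeg_Suc[of m "\<lambda>y. of_bool (y = x)"]
    by (cases x) (simp_all add: degree_count_def[abs_def] avg_add avg_cmult del: sum.lessThan_Suc)
qed

lemma avg_degree_moment_Suc:
  "avg (Suc m) (degree_moment b (Suc (Suc m))) = (m + b) / Suc m * avg m (degree_moment b (Suc m)) + 1"
proof -
  have "(\<lambda>u. \<Sum>v<Suc m. m * b ^ rrt_outdeg u (Suc m) v + b ^ (rrt_outdeg u (Suc m) v + 1))
      = (\<lambda>u. (m + b) * degree_moment b (Suc m) u)"
    by (simp add: fun_eq_iff degree_moment_def sum.distrib sum_distrib_left algebra_simps del: sum.lessThan_Suc)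
  then show ?thesis
    using avg_sum_outdeg_Suc[of m "\<lambda>y. b ^ y"]
    by (simp add: degree_moment_def[abs_def] avg_cmult del: sum.lessThan_Suc)
qed

lemma avg_degree_count_approx: "\<bar>avg m (degree_count (Suc m) x) - Suc m / 2 ^ (x + 1)\<bar> \<le> 1"
proof (induction m arbitrary: x)
  case 0
  have "(1::real) \<le> 2 ^ (x + 1)"
    by (rule one_le_power) simp
  then show ?case
    by (cases x) (simp_all add: avg_0 degree_count_def rrt_outdeg_def)
next
  case (Suc m)
  define e where "e y = avg m (degree_count (Suc m) y) - Suc m / 2 ^ (y + 1)" for y
  have mean_0: "m * A / (m + 1) + 1 - (m + 2) / 2 = (m * (A - (m + 1) / 2) + 0) / (m + 1)"
    for A :: real
    by (simp add: field_simps)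
  have mean_Suc: "(m * A + B) / (m + 1) - (m + 2) / (2 * P)
      = (m * (A - (m + 1) / (2 * P)) + (B - (m + 1) / P)) / (m + 1)" if "0 < P"
    for A B P :: real
    using that by (simp add: divide_simps) (simp add: algebra_simps)
  have rec: "avg (Suc m) (degree_count (Suc (Suc m)) x) - Suc (Suc m) / 2 ^ (x + 1)
      = (m * e x + (if x = 0 then 0 else e (x - 1))) / (real m + 1)"
  proof (cases x)
    case 0
    then show ?thesis
      using mean_0 by (simp add: avg_degree_count_Suc e_def)
  next
    case (Suc y)
    then show ?thesis
      using mean_Suc[of "2 ^ (y + 1)"] by (simp add: avg_degree_count_Suc e_def)
  qed
  have "\<bar>e x\<bar> \<le> 1"
    unfolding e_def by (rule Suc.IH)
  moreover have "\<bar>if x = 0 then 0 else e (x - 1)\<bar> \<le> 1"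
    unfolding e_def using Suc.IH[of "x - 1"] by (cases x) simp_all
  ultimately show ?case
    unfolding rec by (intro abs_weighted_mean_le_1) auto
qed

lemma avg_degree_moment_le:
  assumes "1 \<le> b" "b < 2"
  shows "avg m (degree_moment b (Suc m)) \<le> Suc m / (2 - b)"
proof (induction m)
  case 0
  then show ?case
    using assms by (simp add: avg_0 degree_moment_def rrt_outdeg_def field_simps)
next
  case (Suc m)
  have "(m + b) / Suc m * avg m (degree_moment b (Suc m)) \<le> (m + b) / Suc m * (Suc m / (2 - b))"
    using Suc.IH assms by (intro mult_left_mono) auto
  also have "\<dots> = (m + b) / (2 - b)"
    by simp
  also have "\<dots> + 1 = Suc (Suc m) / (2 - b)"
    using assms by (simp add: field_simps)
  finally show ?case
    by (simp add: avg_degree_moment_Suc)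
qed

section \<open>Almost sure bounds on the degree statistics\<close>

lemma borel_cantelli_prefix_dep:
  assumes "\<And>i. prefix_dep (m i) (P i)" "summable (\<lambda>i. measure rrt_space {w. P i w})"
  shows "AE w in rrt_space. eventually (\<lambda>i. \<not> P i w) sequentially"
proof -
  have "AE w in rrt_space. eventually (\<lambda>i. w \<in> space rrt_space - {w. P i w}) sequentially"
    using assms by (intro borel_cantelli_AE1 sets_prefix_dep) (auto simp: rrt.emeasure_eq_measure)
  then show ?thesis
    by simp
qed

lemma abs_sum_diff_le_2:
  fixes g h :: "'a \<Rightarrow> real"
  assumes "finite A" "\<And>v. v \<in> A \<Longrightarrow> v \<noteq> a \<Longrightarrow> v \<noteq> b \<Longrightarrow> g v = h v" "\<And>v. \<bar>g v - h v\<bar> \<le> 1"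
  shows "\<bar>sum g A - sum h A\<bar> \<le> 2"
proof -
  have "sum g A - sum h A = (\<Sum>v\<in>A. g v - h v)"
    by (simp add: sum_subtractf)
  also have "\<dots> = (\<Sum>v\<in>A \<inter> {a, b}. g v - h v) + (\<Sum>v\<in>A - {a, b}. g v - h v)"
    using assms(1) by (rule sum.Int_Diff)
  also have "(\<Sum>v\<in>A - {a, b}. g v - h v) = 0"
    using assms(2) by (intro sum.neutral) auto
  finally have "\<bar>sum g A - sum h A\<bar> \<le> (\<Sum>v\<in>A \<inter> {a, b}. \<bar>g v - h v\<bar>)"
    by (simp add: sum_abs)
  also have "\<dots> \<le> card (A \<inter> {a, b})"
    using sum_mono[of "A \<inter> {a, b}" "\<lambda>v. \<bar>g v - h v\<bar>" "\<lambda>_. 1"] assms(3) by simp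
  also have "\<dots> \<le> card {a, b}"
    by (intro of_nat_mono card_mono) auto
  also have "\<dots> \<le> 2"
    by (simp add: card_insert_if)
  finally show ?thesis .
qed

text \<open>Re-attaching one node changes the out-degree of only its old and its new parent.\<close>
lemma bounded_differences_degree_count: "bounded_differences m 2 (degree_count n x)"
  unfolding bounded_differences_def
proof (intro ballI allI impI)
  fix u k j
  show "\<bar>degree_count n x (u(k := j)) - degree_count n x u\<bar> \<le> 2"
    unfolding degree_count_def
    by (rule abs_sum_diff_le_2[where a = "u k" and b = j]) (auto simp: rrt_outdeg_update_other)
qed

text \<open>The exponent of \<open>mcdiarmid_tail\<close> for \<open>D = 2\<close>, deviation \<open>s\<close> and parameter \<open>l = s / (m + 1)\<close>.\<close>
lemma mcdiarmid_exponent_le: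
  fixes m :: nat
  defines "s \<equiv> real (Suc m) powr (3/4)"
  shows "- (s / Suc m) * s + (s / Suc m)\<^sup>2 * 2\<^sup>2 * m / 8 \<le> - sqrt (Suc m) / 2"
proof -
  define M where "M = real (Suc m)"
  have "M > 0"
    by (simp add: M_def)
  have "s * s = M powr (3/4 + 3/4)"
    unfolding s_def M_def[symmetric] by (rule powr_add[symmetric])
  also have "(3/4 + 3/4 :: real) = 1 + 1/2"
    by simp
  also have "M powr (1 + 1/2) = M * sqrt M"
    unfolding powr_add using \<open>M > 0\<close> by (simp add: powr_half_sqrt)
  finally have s2: "s * s = M * sqrt M" .
  have "- (s / M) * s + (s / M)\<^sup>2 * 2\<^sup>2 * m / 8 = (s * s) * (m / (2 * M\<^sup>2) - 1 / M)"
    using \<open>M > 0\<close> by (simp add: power2_eq_square field_simps)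
  also have "\<dots> \<le> (s * s) * (M / (2 * M\<^sup>2) - 1 / M)"
    using \<open>M > 0\<close> by (intro mult_left_mono diff_right_mono divide_right_mono) (auto simp: M_def)
  also have "\<dots> = - sqrt M / 2"
    unfolding s2 using \<open>M > 0\<close> by (simp add: power2_eq_square field_simps)
  finally show ?thesis
    by (simp add: M_def)
qed

lemma degree_count_deviation_gt_1_imp_le:
  assumes "1 < \<bar>degree_count (Suc m) x w - Suc m / 2 ^ (x + 1)\<bar>"
  shows "x \<le> m"
proof (rule ccontr)
  assume "\<not> x \<le> m"
  then have "\<bar>degree_count (Suc m) x w - Suc m / 2 ^ (x + 1)\<bar> = Suc m / 2 ^ (x + 1)"
    by (simp add: degree_count_eq_0)
  moreover have "Suc m < (2::nat) ^ (x + 1)"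
    using less_exp[of "x + 1"] \<open>\<not> x \<le> m\<close> by linarith
  then have "real (Suc m) / 2 ^ (x + 1) < 1"
    by (metis divide_less_eq_1_pos of_nat_less_iff of_nat_numeral of_nat_power zero_less_power
        zero_less_numeral)
  ultimately show False
    using assms by linarith
qed

lemma measure_degree_count_deviation:
  "measure rrt_space {w. \<exists>x. 1 + Suc m powr (3/4) < \<bar>degree_count (Suc m) x w - Suc m / 2 ^ (x + 1)\<bar>}
     \<le> 2 * Suc m * exp (- sqrt (Suc m) / 2)"
proof -
  define s where "s = Suc m powr (3/4)"
  define l where "l = s / Suc m"
  define bad where "bad w \<longleftrightarrow> (\<exists>x. 1 + s < \<bar>degree_count (Suc m) x w - Suc m / 2 ^ (x + 1)\<bar>)" for w
  define dev where "dev x w = \<bar>degree_count (Suc m) x w - avg m (degree_count (Suc m) x)\<bar>" for x w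
  have bad_le: "of_bool (bad w) \<le> (\<Sum>x\<le>m. of_bool (s \<le> dev x w) :: real)" for w
  proof (cases "bad w")
    case True
    then obtain x where x: "1 + s < \<bar>degree_count (Suc m) x w - Suc m / 2 ^ (x + 1)\<bar>"
      unfolding bad_def by blast
    have "0 \<le> s"
      by (simp add: s_def)
    with x have "x \<le> m"
      by (intro degree_count_deviation_gt_1_imp_le[of m x w]) linarith
    moreover have "s \<le> dev x w"
      using x avg_degree_count_approx[of m x] unfolding dev_def by linarith
    ultimately show ?thesis
      using True member_le_sum[of x "{..m}" "\<lambda>x. of_bool (s \<le> dev x w) :: real"] by simp
  qed (simp add: sum_nonneg)
  have "prefix_dep m bad"
    unfolding bad_def[abs_def]
    by (rule prefix_dep_combine[where F = "degree_count (Suc m)"]) (rule prefix_dep_degree_count, simp)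
  then have "measure rrt_space {w. bad w} = avg m (\<lambda>w. of_bool (bad w))"
    by (rule measure_prefix_dep)
  also have "\<dots> \<le> avg m (\<lambda>w. \<Sum>x\<le>m. of_bool (s \<le> dev x w))"
    by (intro avg_mono bad_le)
  also have "\<dots> = (\<Sum>x\<le>m. avg m (\<lambda>w. of_bool (s \<le> dev x w)))"
    by (rule avg_sum) simp
  also have "\<dots> \<le> (\<Sum>x\<le>m. 2 * exp (- l * s + l\<^sup>2 * 2\<^sup>2 * m / 8))"
    unfolding dev_def
    by (intro sum_mono mcdiarmid_tail bounded_differences_degree_count) (simp add: l_def s_def)
  also have "\<dots> \<le> (\<Sum>x\<le>m. 2 * exp (- sqrt (Suc m) / 2))"
    using mcdiarmid_exponent_le[of m] by (intro sum_mono) (simp add: l_def s_def)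
  also have "\<dots> = 2 * Suc m * exp (- sqrt (Suc m) / 2)"
    by simp
  finally show ?thesis
    by (simp only: bad_def s_def)
qed

lemma AE_degree_count_approx:
  "AE w in rrt_space. eventually
     (\<lambda>n. \<forall>x. \<bar>degree_count n x w - n / 2 ^ (x + 1)\<bar> \<le> 1 + n powr (3/4)) sequentially"
proof -
  define bad where "bad m w \<longleftrightarrow>
    (\<exists>x. 1 + Suc m powr (3/4) < \<bar>degree_count (Suc m) x w - Suc m / 2 ^ (x + 1)\<bar>)" for m w
  have "summable (\<lambda>m. 2 * Suc m * exp (- sqrt (Suc m) / 2))"
  proof (rule summable_comparison_test_bigo)
    show "summable (\<lambda>m. norm (1 / real m ^ 2))"
      using inverse_power_summable[of 2, where ?'a = real] by (simp add: divide_inverse)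
    show "(\<lambda>m. 2 * Suc m * exp (- sqrt (Suc m) / 2)) \<in> O(\<lambda>m. 1 / real m ^ 2)"
      by real_asymp
  qed
  moreover have "norm (measure rrt_space {w. bad m w}) \<le> 2 * Suc m * exp (- sqrt (Suc m) / 2)" for m
    using measure_degree_count_deviation[of m] by (simp add: bad_def)
  ultimately have "summable (\<lambda>m. measure rrt_space {w. bad m w})"
    by (rule summable_comparison_test')
  moreover have "prefix_dep m (bad m)" for m
    unfolding bad_def[abs_def]
    by (rule prefix_dep_combine[where F = "degree_count (Suc m)"]) (rule prefix_dep_degree_count, simp)
  ultimately have "AE w in rrt_space. eventually (\<lambda>m. \<not> bad m w) sequentially"
    by (intro borel_cantelli_prefix_dep)
  then show ?thesis
  proof eventually_elim
    case (elim w)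
    then have "eventually (\<lambda>m. \<forall>x. \<bar>degree_count (Suc m) x w - Suc m / 2 ^ (x + 1)\<bar>
        \<le> 1 + Suc m powr (3/4)) sequentially"
      by (rule eventually_mono) (simp add: bad_def not_less)
    then show ?case
      by (rule eventually_sequentially_Suc[THEN iffD1])
  qed
qed

definition degree_cutoff :: "nat \<Rightarrow> nat" where
  "degree_cutoff n = floor_log n div 5"

lemma degree_cutoff_bounds:
  assumes "1 \<le> n"
  shows "32 ^ degree_cutoff n \<le> n" "n < 32 ^ Suc (degree_cutoff n)"
proof -
  have pow32: "(32::nat) ^ k = 2 ^ (5 * k)" for k
    by (simp add: power_mult)
  have "(2::nat) ^ (5 * degree_cutoff n) \<le> 2 ^ floor_log n"
    unfolding degree_cutoff_def by (intro power_increasing) auto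
  also have "\<dots> \<le> n"
    using assms by (intro floor_log_exp2_le) simp
  finally show "32 ^ degree_cutoff n \<le> n"
    unfolding pow32 .
  have "n < 2 ^ Suc (floor_log n)"
    using floor_log_exp2_gt[of n] by simp
  also have "\<dots> \<le> 2 ^ (5 * Suc (degree_cutoff n))"
    unfolding degree_cutoff_def by (intro power_increasing) auto
  finally show "n < 32 ^ Suc (degree_cutoff n)"
    unfolding pow32 .
qed

lemma two_power_degree_cutoff_le:
  assumes "1 \<le> n"
  shows "2 ^ degree_cutoff n \<le> real n powr (1/5)"
proof -
  have "(2::real) ^ degree_cutoff n = (32 ^ degree_cutoff n) powr (1/5)"
    by (simp add: powr_realpow[symmetric] powr_powr power_mult[symmetric])
  also have "\<dots> \<le> real n powr (1/5)"
    using degree_cutoff_bounds(1)[OF assms] by (intro powr_mono2) (simp_all flip: of_nat_le_iff)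
  finally show ?thesis .
qed

lemma filterlim_degree_cutoff: "filterlim degree_cutoff at_top sequentially"
  unfolding filterlim_at_top eventually_sequentially
proof (intro allI exI[of _ "32 ^ k" for k] impI)
  fix k n :: nat
  assume "32 ^ k \<le> n"
  then have "floor_log (2 ^ (5 * k)) \<le> floor_log n"
    by (intro floor_log_le_iff) (simp add: power_mult)
  then show "k \<le> degree_cutoff n"
    by (simp add: floor_log_power degree_cutoff_def)
qed

lemma measure_degree_moment_large:
  assumes "1 \<le> b" "b < 2" "0 < \<rho>"
  shows "measure rrt_space {w. (32 / \<rho>) ^ i \<le> degree_moment b (32 ^ Suc i) w} \<le> 32 / (2 - b) * \<rho> ^ i"
proof -
  define m :: nat where "m = 32 ^ Suc i - 1"
  have Sm: "Suc m = 32 ^ Suc i"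
    by (simp add: m_def)
  have "prefix_dep m (\<lambda>w. (32 / \<rho>) ^ i \<le> degree_moment b (Suc m) w)"
    by (rule prefix_dep_comp[where F = "degree_moment b (Suc m)", OF prefix_dep_degree_moment]) simp
  then have "measure rrt_space {w. (32 / \<rho>) ^ i \<le> degree_moment b (Suc m) w}
      = avg m (\<lambda>w. of_bool ((32 / \<rho>) ^ i \<le> degree_moment b (Suc m) w))"
    by (rule measure_prefix_dep)
  also have "\<dots> \<le> avg m (degree_moment b (Suc m)) / (32 / \<rho>) ^ i"
    using assms by (intro avg_markov degree_moment_nonneg) auto
  also have "\<dots> \<le> Suc m / (2 - b) / (32 / \<rho>) ^ i"
    using assms by (intro divide_right_mono avg_degree_moment_le) auto
  also have "\<dots> = 32 / (2 - b) * \<rho> ^ i"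
    unfolding Sm using assms by (simp add: power_divide field_simps)
  finally show ?thesis
    by (simp only: Sm)
qed

lemma AE_degree_moment_le:
  assumes "1 \<le> b" "b < 2" "0 < \<rho>" "\<rho> < 1"
  shows "AE w in rrt_space. eventually (\<lambda>n. degree_moment b n w \<le> n / \<rho> ^ degree_cutoff n) sequentially"
proof -
  define bad where "bad i w \<longleftrightarrow> (32 / \<rho>) ^ i \<le> degree_moment b (32 ^ Suc i) w" for i w
  have "summable (\<lambda>i. 32 / (2 - b) * \<rho> ^ i)"
    using assms by (intro summable_mult summable_geometric) auto
  then have "summable (\<lambda>i. measure rrt_space {w. bad i w})"
    by (rule summable_comparison_test')
      (simp only: real_norm_def abs_of_nonneg[OF measure_nonneg] bad_def measure_degree_moment_large assms)
  moreover have "prefix_dep (32 ^ Suc i - 1) (bad i)" for i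
    unfolding bad_def[abs_def]
    by (rule prefix_dep_comp[where F = "degree_moment b (32 ^ Suc i)", OF prefix_dep_degree_moment]) simp
  ultimately have "AE w in rrt_space. eventually (\<lambda>i. \<not> bad i w) sequentially"
    by (intro borel_cantelli_prefix_dep)
  then show ?thesis
  proof eventually_elim
    case (elim w)
    have "eventually (\<lambda>n. \<not> bad (degree_cutoff n) w) sequentially"
      using eventually_compose_filterlim[OF elim filterlim_degree_cutoff] .
    then show ?case
      using eventually_ge_at_top[of 1]
    proof eventually_elim
      case (elim n)
      define k where "k = degree_cutoff n"
      have "degree_moment b n w \<le> degree_moment b (32 ^ Suc k) w"
        using assms degree_cutoff_bounds(2)[of n] elim by (intro degree_moment_mono) (auto simp: k_def)
      also have "\<dots> < (32 / \<rho>) ^ k"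
        using elim by (simp add: bad_def k_def)
      also have "\<dots> \<le> n / \<rho> ^ k"
        using assms degree_cutoff_bounds(1)[of n] elim
        by (simp add: power_divide k_def divide_right_mono flip: of_nat_le_iff)
      finally show ?case
        by (simp add: k_def)
    qed
  qed
qed

section \<open>Convergence of the degree functional\<close>

lemma sum_outdeg_split:
  "(\<Sum>v<n. f (rrt_outdeg w n v))
   = (\<Sum>x<k. f x * degree_count n x w) + (\<Sum>v<n. if k \<le> rrt_outdeg w n v then f (rrt_outdeg w n v) else 0)"
proof -
  have "f (rrt_outdeg w n v) = (\<Sum>x<k. f x * of_bool (rrt_outdeg w n v = x))
      + (if k \<le> rrt_outdeg w n v then f (rrt_outdeg w n v) else 0)" for v
    by (cases "rrt_outdeg w n v < k") (simp_all add: of_bool_def if_distrib sum.delta' cong: if_cong)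
  then have "(\<Sum>v<n. f (rrt_outdeg w n v)) = (\<Sum>v<n. (\<Sum>x<k. f x * of_bool (rrt_outdeg w n v = x))
      + (if k \<le> rrt_outdeg w n v then f (rrt_outdeg w n v) else 0))"
    by (rule sum.cong[OF refl])
  also have "\<dots> = (\<Sum>x<k. f x * degree_count n x w)
      + (\<Sum>v<n. if k \<le> rrt_outdeg w n v then f (rrt_outdeg w n v) else 0)"
    unfolding sum.distrib degree_count_def sum_distrib_left by (subst sum.swap) (rule refl)
  finally show ?thesis .
qed

lemma low_degrees_error_le:
  assumes f: "\<And>x. \<bar>f x\<bar> \<le> C * 2 ^ x" and E: "\<And>x. \<bar>degree_count n x w - n / 2 ^ (x + 1)\<bar> \<le> E"
  shows "\<bar>(\<Sum>x<k. f x * degree_count n x w) - n * (\<Sum>x<k. f x / 2 ^ (x + 1))\<bar> \<le> C * 2 ^ k * E"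
proof -
  have "0 \<le> C" "0 \<le> E"
    using order_trans[OF abs_ge_zero f[of 0]] order_trans[OF abs_ge_zero E[of 0]] by simp_all
  have "\<bar>(\<Sum>x<k. f x * degree_count n x w) - n * (\<Sum>x<k. f x / 2 ^ (x + 1))\<bar>
      = \<bar>\<Sum>x<k. f x * (degree_count n x w - n / 2 ^ (x + 1))\<bar>"
    by (simp add: sum_distrib_left sum_subtractf algebra_simps)
  also have "\<dots> \<le> (\<Sum>x<k. C * 2 ^ x * E)"
  proof (intro order_trans[OF sum_abs] sum_mono)
    fix x
    show "\<bar>f x * (degree_count n x w - n / 2 ^ (x + 1))\<bar> \<le> C * 2 ^ x * E"
      unfolding abs_mult using \<open>0 \<le> C\<close> by (intro mult_mono f E) auto
  qed
  also have "\<dots> = C * E * (\<Sum>x<k. 2 ^ x)"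
    by (simp add: sum_distrib_left mult_ac)
  also have "(\<Sum>x<k. (2::real) ^ x) \<le> 2 ^ k"
    by (induction k) auto
  then have "C * E * (\<Sum>x<k. 2 ^ x) \<le> C * E * 2 ^ k"
    using \<open>0 \<le> C\<close> \<open>0 \<le> E\<close> by (intro mult_left_mono) auto
  finally show ?thesis
    by (simp add: mult_ac)
qed

lemma high_degrees_le:
  assumes f: "\<And>x. \<bar>f x\<bar> \<le> C * c ^ x" and "0 < c" "c \<le> b"
  shows "\<bar>\<Sum>v<n. if k \<le> rrt_outdeg w n v then f (rrt_outdeg w n v) else 0\<bar>
    \<le> C * (c / b) ^ k * degree_moment b n w"
proof -
  have "0 \<le> C"
    using order_trans[OF abs_ge_zero f[of 0]] by simp
  have "\<bar>if k \<le> d then f d else 0\<bar> \<le> C * (c / b) ^ k * b ^ d" for d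
  proof (cases "k \<le> d")
    case True
    have "\<bar>f d\<bar> \<le> C * ((c / b) ^ d * b ^ d)"
      using f[of d] \<open>0 < c\<close> \<open>c \<le> b\<close> by (simp add: power_divide)
    also have "\<dots> \<le> C * ((c / b) ^ k * b ^ d)"
      using True \<open>0 \<le> C\<close> \<open>0 < c\<close> \<open>c \<le> b\<close>
      by (intro mult_left_mono mult_right_mono power_decreasing) auto
    finally show ?thesis
      using True by (simp add: mult_ac)
  qed (use \<open>0 \<le> C\<close> \<open>0 < c\<close> \<open>c \<le> b\<close> in simp)
  then show ?thesis
    unfolding degree_moment_def sum_distrib_left by (intro order_trans[OF sum_abs] sum_mono)
qed

lemma summable_div_power_two:
  fixes f :: "nat \<Rightarrow> real"
  assumes f: "\<And>x. \<bar>f x\<bar> \<le> C * c ^ x" and "0 \<le> c" "c < 2"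
  shows "summable (\<lambda>x. f x / 2 ^ (x + 1))"
proof -
  have "summable (\<lambda>x. C / 2 * (c / 2) ^ x)"
    using assms by (intro summable_mult summable_geometric) auto
  then show ?thesis
    by (rule summable_comparison_test') (simp add: abs_divide power_divide divide_right_mono f)
qed

lemma degree_functional_error_le:
  assumes f: "\<And>x. \<bar>f x\<bar> \<le> C * c ^ x" and c: "0 < c" "c \<le> b" "b \<le> 2" and "0 < \<rho>" "1 \<le> n"
    and low: "\<And>x. \<bar>degree_count n x w - n / 2 ^ (x + 1)\<bar> \<le> 1 + n powr (3/4)"
    and high: "degree_moment b n w \<le> n / \<rho> ^ degree_cutoff n"
  shows "\<bar>(\<Sum>v<n. f (rrt_outdeg w n v)) / n - (\<Sum>x<degree_cutoff n. f x / 2 ^ (x + 1))\<bar>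
    \<le> C * (n powr (1/5) * (1 + n powr (3/4)) / n) + C * (c / b / \<rho>) ^ degree_cutoff n"
proof -
  define k where "k = degree_cutoff n"
  define T where "T = (\<Sum>x<k. f x * degree_count n x w)"
  define Q where "Q = (\<Sum>v<n. if k \<le> rrt_outdeg w n v then f (rrt_outdeg w n v) else 0)"
  define S where "S = (\<Sum>x<k. f x / 2 ^ (x + 1))"
  have "0 \<le> C"
    using order_trans[OF abs_ge_zero f[of 0]] by simp
  have "\<bar>f x\<bar> \<le> C * 2 ^ x" for x
  proof -
    have "C * c ^ x \<le> C * 2 ^ x"
      using c \<open>0 \<le> C\<close> by (intro mult_left_mono power_mono) auto
    then show ?thesis
      using f[of x] by linarith
  qed
  then have "\<bar>T - n * S\<bar> \<le> C * 2 ^ k * (1 + n powr (3/4))"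
    unfolding T_def S_def using low by (rule low_degrees_error_le)
  also have "\<dots> \<le> C * n powr (1/5) * (1 + n powr (3/4))"
    using two_power_degree_cutoff_le[OF \<open>1 \<le> n\<close>] \<open>0 \<le> C\<close>
    by (intro mult_right_mono mult_left_mono) (auto simp: k_def)
  finally have low_le: "\<bar>T / n - S\<bar> \<le> C * (n powr (1/5) * (1 + n powr (3/4)) / n)"
    using \<open>1 \<le> n\<close> by (simp add: abs_divide field_simps)
  have "\<bar>Q\<bar> \<le> C * (c / b) ^ k * degree_moment b n w"
    unfolding Q_def using f c by (intro high_degrees_le) auto
  also have "\<dots> \<le> C * (c / b) ^ k * (n / \<rho> ^ k)"
    using high \<open>0 \<le> C\<close> c by (intro mult_left_mono) (auto simp: k_def)
  also have "\<dots> = n * (C * (c / b / \<rho>) ^ k)"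
    by (simp add: power_divide power_mult_distrib)
  finally have high_le: "\<bar>Q / n\<bar> \<le> C * (c / b / \<rho>) ^ k"
    using \<open>1 \<le> n\<close> by (simp add: abs_divide field_simps)
  have "(\<Sum>v<n. f (rrt_outdeg w n v)) / n - S = (T / n - S) + Q / n"
    by (simp add: sum_outdeg_split[of f w n k] T_def Q_def add_divide_distrib)
  then show ?thesis
    using abs_triangle_ineq[of "T / n - S" "Q / n"] low_le high_le
    unfolding k_def[symmetric] S_def[symmetric] by linarith
qed

lemma degree_functional_tendsto:
  assumes f: "\<And>x. \<bar>f x\<bar> \<le> C * c ^ x" and c: "0 < c" "c < b" "b \<le> 2" and \<rho>: "c / b < \<rho>" "\<rho> < 1"
    and low: "eventually (\<lambda>n. \<forall>x. \<bar>degree_count n x w - n / 2 ^ (x + 1)\<bar> \<le> 1 + n powr (3/4)) sequentially"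
    and high: "eventually (\<lambda>n. degree_moment b n w \<le> n / \<rho> ^ degree_cutoff n) sequentially"
  shows "(\<lambda>n. (\<Sum>v<n. f (rrt_outdeg w n v)) / n) \<longlonglongrightarrow> (\<Sum>x. f x / 2 ^ (x + 1))"
proof -
  define L where "L = (\<Sum>x. f x / 2 ^ (x + 1))"
  define r where "r = c / b / \<rho>"
  have "0 < c / b"
    using c by simp
  then have "0 < \<rho>"
    using \<rho> by linarith
  have "0 < r"
    unfolding r_def using \<open>0 < c / b\<close> \<open>0 < \<rho>\<close> by (rule divide_pos_pos)
  have "r < 1"
    unfolding r_def using \<rho>(1) by (subst divide_less_eq_1_pos[OF \<open>0 < \<rho>\<close>])
  have "(\<lambda>k. \<Sum>x<k. f x / 2 ^ (x + 1)) \<longlonglongrightarrow> L"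
    unfolding L_def using f c by (intro summable_LIMSEQ summable_div_power_two) auto
  then have "(\<lambda>n. \<Sum>x<degree_cutoff n. f x / 2 ^ (x + 1)) \<longlonglongrightarrow> L"
    by (rule filterlim_compose[OF _ filterlim_degree_cutoff])
  then have S: "(\<lambda>n. \<bar>(\<Sum>x<degree_cutoff n. f x / 2 ^ (x + 1)) - L\<bar>) \<longlonglongrightarrow> 0"
    by (intro tendsto_rabs_zero LIM_zero)
  have "(\<lambda>k. r ^ k) \<longlonglongrightarrow> 0"
    using \<open>0 < r\<close> \<open>r < 1\<close> by (intro LIMSEQ_power_zero) auto
  then have R: "(\<lambda>n. r ^ degree_cutoff n) \<longlonglongrightarrow> 0"
    by (rule filterlim_compose[OF _ filterlim_degree_cutoff])
  have P: "(\<lambda>n::nat. n powr (1/5) * (1 + n powr (3/4)) / n) \<longlonglongrightarrow> 0"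
    by real_asymp
  define err where "err n = C * (n powr (1/5) * (1 + n powr (3/4)) / n)
    + \<bar>(\<Sum>x<degree_cutoff n. f x / 2 ^ (x + 1)) - L\<bar> + C * r ^ degree_cutoff n" for n :: nat
  have "err \<longlonglongrightarrow> C * 0 + 0 + C * 0"
    unfolding err_def by (intro tendsto_intros P S R)
  then have err_lim: "err \<longlonglongrightarrow> 0"
    by simp
  have err_bound: "eventually (\<lambda>n. norm ((\<Sum>v<n. f (rrt_outdeg w n v)) / n - L) \<le> err n) sequentially"
    using low high eventually_ge_at_top[of 1]
  proof eventually_elim
    case (elim n)
    then have "\<bar>(\<Sum>v<n. f (rrt_outdeg w n v)) / n - (\<Sum>x<degree_cutoff n. f x / 2 ^ (x + 1))\<bar>
        \<le> C * (n powr (1/5) * (1 + n powr (3/4)) / n) + C * r ^ degree_cutoff n"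
      unfolding r_def using f c \<open>0 < \<rho>\<close> by (intro degree_functional_error_le) auto
    then show ?case
      unfolding err_def real_norm_def
      using abs_triangle_ineq[of "(\<Sum>v<n. f (rrt_outdeg w n v)) / n - (\<Sum>x<degree_cutoff n. f x / 2 ^ (x + 1))"
          "(\<Sum>x<degree_cutoff n. f x / 2 ^ (x + 1)) - L"]
      by linarith
  qed
  have "(\<lambda>n. (\<Sum>v<n. f (rrt_outdeg w n v)) / n - L) \<longlonglongrightarrow> 0"
    by (rule Lim_null_comparison[OF err_bound err_lim])
  then show ?thesis
    unfolding L_def by (rule LIM_zero_cancel)
qed

lemma AE_degree_functional_tendsto:
  assumes f: "\<And>x. \<bar>f x\<bar> \<le> C * c ^ x" and c: "0 < c" "c < 2"
  shows "AE w in rrt_space. (\<lambda>n. (\<Sum>v<n. f (rrt_outdeg w n v)) / n) \<longlonglongrightarrow> (\<Sum>x. f x / 2 ^ (x + 1))"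
proof -
  define b where "b = (c + 2) / 2"
  have b: "1 \<le> b" "c < b" "b < 2"
    using c by (auto simp: b_def)
  define r where "r = c / b"
  have "0 < r" "r < 1"
    using b c by (simp_all add: r_def)
  define \<rho> where "\<rho> = (1 + r) / 2"
  have \<rho>: "c / b < \<rho>" "\<rho> < 1" "0 < \<rho>"
    using \<open>0 < r\<close> \<open>r < 1\<close> by (simp_all add: \<rho>_def flip: r_def)
  show ?thesis
    using AE_degree_count_approx AE_degree_moment_le[OF b(1,3) \<rho>(3,2)]
  proof eventually_elim
    case (elim w)
    show ?case
      using f c b \<rho> elim by (intro degree_functional_tendsto[where b = b and \<rho> = \<rho>]) auto
  qed
qed

lemma bigo_imp_power_bound:
  fixes f :: "nat \<Rightarrow> real"
  assumes "f \<in> O(\<lambda>x. c ^ x)" "0 < c"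
  obtains C where "\<And>x. \<bar>f x\<bar> \<le> C * c ^ x"
proof -
  obtain K where "eventually (\<lambda>x. norm (f x) \<le> K * norm (c ^ x)) at_top"
    using landau_o.bigE[OF assms(1)] by blast
  then obtain N where K: "\<And>x. N \<le> x \<Longrightarrow> \<bar>f x\<bar> \<le> K * c ^ x"
    using \<open>0 < c\<close> by (auto simp: eventually_at_top_linorder)
  define C where "C = \<bar>K\<bar> + (\<Sum>x<N. \<bar>f x\<bar> / c ^ x)"
  have "\<bar>f x\<bar> \<le> C * c ^ x" for x
  proof (cases "x < N")
    case True
    have "\<bar>f x\<bar> / c ^ x \<le> (\<Sum>x<N. \<bar>f x\<bar> / c ^ x)"
      using True \<open>0 < c\<close> by (intro member_le_sum) auto
    also have "\<dots> \<le> C"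
      by (simp add: C_def)
    finally show ?thesis
      using \<open>0 < c\<close> by (simp add: divide_le_eq)
  next
    case False
    have "0 \<le> (\<Sum>x<N. \<bar>f x\<bar> / c ^ x)"
      using \<open>0 < c\<close> by (intro sum_nonneg) simp
    then have "K * c ^ x \<le> C * c ^ x"
      using \<open>0 < c\<close> by (intro mult_right_mono) (auto simp: C_def)
    then show ?thesis
      using K[of x] False by simp
  qed
  then show ?thesis
    by (rule that)
qed

theorem proposition1:
  fixes \<epsilon> q :: real and f :: "nat \<Rightarrow> real"
  assumes "0 < \<epsilon>" "\<epsilon> < 1/2" "1 < q" "q < 2"
    and "f \<in> o(\<lambda>x. (2 - \<epsilon>) powr (real x / q))"
  shows "AE w in rrt_space.
           (\<lambda>n. integral_mset f (rrt_Out w n) / real n)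
             \<longlonglongrightarrow> (\<Sum>x. 2 powi (- int x - 1) * f x)"
proof -
  define c where "c = (2 - \<epsilon>) powr (1 / q)"
  have "0 < c"
    using assms by (simp add: c_def)
  have "c < (2 - \<epsilon>) powr 1"
    unfolding c_def using assms by (intro powr_less_mono) auto
  then have "c < 2"
    using assms by simp
  have "(2 - \<epsilon>) powr (real x / q) = c ^ x" for x
    using assms by (simp add: c_def powr_powr powr_realpow[symmetric])
  then have "f \<in> O(\<lambda>x. c ^ x)"
    using landau_o.small_imp_big[OF assms(5)] by simp
  then obtain C where "\<And>x. \<bar>f x\<bar> \<le> C * c ^ x"
    using bigo_imp_power_bound \<open>0 < c\<close> by blast
  then have "AE w in rrt_space. (\<lambda>n. (\<Sum>v<n. f (rrt_outdeg w n v)) / n) \<longlonglongrightarrow> (\<Sum>x. f x / 2 ^ (x + 1))"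
    using \<open>0 < c\<close> \<open>c < 2\<close> by (rule AE_degree_functional_tendsto)
  moreover have "2 powi (- int x - 1) * f x = f x / 2 ^ (x + 1)" for x
    by (simp add: power_int_diff power_int_minus field_simps)
  ultimately show ?thesis
    by (simp add: integral_mset_rrt_Out)
qed

end
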